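(* Let $n, M \ge 2$ be integers and let $W_1, \dots, W_M \in \mathbb{R}^{n \times n}$ be weighted adjacency matrices (nonnegative entries) of a time-evolving graph on the fixed vertex set $\{v_1, \dots, v_n\}$, such that every row of each $W_t$ has positive sum. Let $S_t = D_t^{-1} W_t$, where $D_t = \mathrm{diag}\big(\sum_j (W_t)_{1j}, \dots, \sum_j (W_t)_{nj}\big)$, be the row-stochastic transition matrices. Let $\boldsymbol{\mu}_1 = \frac{1}{n}\mathbb{1}$ be the uniform density and define $\boldsymbol{\mu}_{t+1} = S_t^\top \boldsymbol{\mu}_t$ for $t = 1, \dots, M-1$; assume all entries of $\boldsymbol{\mu}_t$ are strictly positive for all $t \in \{1, \dots, M\}$, and let $D_{\mu_t} = \mathrm{diag}(\boldsymbol{\mu}_t)$. Define $K_t = S_t$ and $T_t = D_{\mu_{t+1}}^{-1} S_t^\top D_{\mu_t}$ for $t = 1, \dots, M-1$, and let $\mathbf{C} \in \mathbb{R}^{nM \times nM}$ be the block matrix with $n \times n$ blocks $\mathbf{C}_{[s,r]}$ ($s, r \in \{1,\dots,M\}$) given by: $\mathbf{C}_{[1,2]} = K_1$; for $2 \le t \le M-1$, $\mathbf{C}_{[t,t-1]} = \tfrac{1}{2} T_{t-1}$ and $\mathbf{C}_{[t,t+1]} = \tfrac12 K_t$; $\mathbf{C}_{[M,M-1]} = T_{M-1}$; and all other blocks zero. Then: (i) all eigenvalues of $\mathbf{C}$ are real and contained in the interval $[-1, 1]$; (ii) the spectrum of $\mathbf{C}$ is symmetric about zero, i.e., if $\lambda$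 is an eigenvalue of $\mathbf{C}$ then so is $-\lambda$.
   Context: Equivalently, $\mathbf{C} = \mathbf{B}^{-1}\mathbf{A}$, where $\mathbf{A}$ is the symmetric block-tridiagonal matrix with zero diagonal blocks, super-diagonal blocks $C_{t(t+1)} = D_{\mu_t} S_t$ and sub-diagonal blocks $C_{(t+1)t} = C_{t(t+1)}^\top$, and $\mathbf{B}$ is block diagonal with blocks $D_{\mu_1}, 2D_{\mu_2}, \dots, 2D_{\mu_{M-1}}, D_{\mu_M}$. This matrix arises from a multiview canonical correlation analysis maximizing $\sum_{t=1}^{M-1} \mathbf{f}_t^\top C_{t(t+1)} \mathbf{f}_{t+1}$ subject to $\mathbf{f}_t^\top D_{\mu_t} \mathbf{f}_t = 1$. *)

theory Defs
  imports "Jordan_Normal_Form.Char_Poly"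
begin

definition rdeg :: "nat \<Rightarrow> real mat \<Rightarrow> nat \<Rightarrow> real" where
  "rdeg n W i = (\<Sum>j<n. W $$ (i, j))"

definition trans_mat :: "nat \<Rightarrow> real mat \<Rightarrow> real mat" where
  "trans_mat n W = mat n n (\<lambda>(i, j). W $$ (i, j) / rdeg n W i)"

(* densities mu_t, indexed as in the paper from t = 1; mu_1 = 1/n * ones,
   mu_{t+1} = S_t^T mu_t.  The value at index 0 is an unused dummy. *)
fun mu :: "nat \<Rightarrow> (nat \<Rightarrow> real mat) \<Rightarrow> nat \<Rightarrow> real vec" where
  "mu n W 0 = vec n (\<lambda>_. 1 / real n)"
| "mu n W (Suc 0) = vec n (\<lambda>_. 1 / real n)"
| "mu n W (Suc (Suc t)) = transpose_mat (trans_mat n (W (Suc t))) *\<^sub>v mu n W (Suc t)"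

definition Kmat :: "nat \<Rightarrow> (nat \<Rightarrow> real mat) \<Rightarrow> nat \<Rightarrow> real mat" where
  "Kmat n W t = trans_mat n (W t)"

definition Tmat :: "nat \<Rightarrow> (nat \<Rightarrow> real mat) \<Rightarrow> nat \<Rightarrow> real mat" where
  "Tmat n W t = mat n n (\<lambda>(i, j).
     (1 / (mu n W (Suc t) $ i)) * (trans_mat n (W t) $$ (j, i)) * (mu n W t $ j))"

(* The nM x nM block matrix C.  Global row index a corresponds to block
   s = a div n + 1 (1-based, as in the paper) and in-block row a mod n. *)
definition Cmat :: "nat \<Rightarrow> nat \<Rightarrow> (nat \<Rightarrow> real mat) \<Rightarrow> real mat" where
  "Cmat n M W = mat (n * M) (n * M) (\<lambda>(a, b).
     let s = a div n + 1; i = a mod n; r = b div n + 1; j = b mod n in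
     if s = 1 \<and> r = 2 then Kmat n W 1 $$ (i, j)
     else if 2 \<le> s \<and> s \<le> M - 1 \<and> r = s - 1 then Tmat n W (s - 1) $$ (i, j) / 2
     else if 2 \<le> s \<and> s \<le> M - 1 \<and> r = s + 1 then Kmat n W s $$ (i, j) / 2
     else if s = M \<and> r = M - 1 then Tmat n W (M - 1) $$ (i, j)
     else 0)"

end

theory Submission
  imports Defs
begin

(*
  C is B^-1 A with A symmetric and B a positive diagonal matrix, i.e. it is self-adjoint for
  the inner product weighted by B, so its eigenvalues are real.  Every row of C is a convex
  combination of rows of the row-stochastic matrices K_t and T_t, hence C is itself nonnegative
  and row-stochastic, and the maximum-modulus component of an eigenvector shows |lambda| <= 1.
  Finally C only couples consecutive blocks, so flipping the sign of every other block of an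
  eigenvector for lambda yields an eigenvector for -lambda.
*)

lemma eigenvector_component:
  fixes A :: "'a::comm_ring_1 mat"
  assumes "A \<in> carrier_mat N N" and "eigenvector A v l" and "a < N"
  shows "(\<Sum>c<N. A $$ (a, c) * v $ c) = l * v $ a"
proof -
  have "(A *\<^sub>v v) $ a = (l \<cdot>\<^sub>v v) $ a"
    using assms(2) by (simp add: eigenvector_def)
  then show ?thesis
    using assms by (auto simp: eigenvector_def scalar_prod_def lessThan_atLeast0)
qed

lemma eigenvector_nonzero_component:
  assumes "A \<in> carrier_mat N N" and "eigenvector A v l"
  obtains a where "a < N" and "v $ a \<noteq> 0"
  using assms unfolding eigenvector_def
  by (metis carrier_matD(1) carrier_vecD eq_vecI index_zero_vec(1,2))

lemma eigenvector_of_real_component: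
  fixes A :: "real mat"
  assumes "A \<in> carrier_mat N N" and "eigenvector (map_mat complex_of_real A) v l" and "a < N"
  shows "(\<Sum>c<N. complex_of_real (A $$ (a, c)) * v $ c) = l * v $ a"
  using eigenvector_component[of "map_mat complex_of_real A" N v l a] assms by simp

lemma eigenvalue_real_if_symmetrizable:
  fixes A :: "real mat" and w :: "nat \<Rightarrow> real"
  assumes A: "A \<in> carrier_mat N N"
    and w_pos: "\<And>a. a < N \<Longrightarrow> w a > 0"
    and balance: "\<And>a c. a < N \<Longrightarrow> c < N \<Longrightarrow> w a * A $$ (a, c) = w c * A $$ (c, a)"
    and "eigenvalue (map_mat complex_of_real A) l"
  shows "l \<in> \<real>"
proof -
  obtain v where v: "eigenvector (map_mat complex_of_real A) v l"
    using assms(4) unfolding eigenvalue_def by blast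
  define q where
    "q = (\<Sum>a<N. \<Sum>c<N. cnj (v $ a) * complex_of_real (w a * A $$ (a, c)) * v $ c)"
  define R where "R = (\<Sum>a<N. w a * (cmod (v $ a))\<^sup>2)"
  have "q = (\<Sum>a<N. cnj (v $ a) * complex_of_real (w a) *
              (\<Sum>c<N. complex_of_real (A $$ (a, c)) * v $ c))"
    unfolding q_def by (simp add: sum_distrib_left mult.assoc mult.left_commute)
  also have "\<dots> = (\<Sum>a<N. l * complex_of_real (w a * (cmod (v $ a))\<^sup>2))"
  proof (intro sum.cong refl)
    fix a assume "a \<in> {..<N}"
    then have "cnj (v $ a) * complex_of_real (w a) *
                 (\<Sum>c<N. complex_of_real (A $$ (a, c)) * v $ c)
             = l * complex_of_real (w a) * (v $ a * cnj (v $ a))"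
      using eigenvector_of_real_component[OF A v] by (simp add: mult_ac)
    also have "v $ a * cnj (v $ a) = complex_of_real ((cmod (v $ a))\<^sup>2)"
      by (rule complex_norm_square[symmetric])
    finally show "cnj (v $ a) * complex_of_real (w a) *
                    (\<Sum>c<N. complex_of_real (A $$ (a, c)) * v $ c)
                  = l * complex_of_real (w a * (cmod (v $ a))\<^sup>2)"
      by (simp add: mult.assoc)
  qed
  finally have q_eq: "q = l * complex_of_real R"
    unfolding R_def by (simp add: sum_distrib_left)
  \<comment> \<open>\<open>q\<close> is real because \<open>w a * A $$ (a, c)\<close> is symmetric in \<open>a\<close> and \<open>c\<close>\<close>
  have "cnj q = (\<Sum>a<N. \<Sum>c<N. v $ a * complex_of_real (w c * A $$ (c, a)) * cnj (v $ c))"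
    unfolding q_def cnj_sum by (intro sum.cong refl) (simp add: balance)
  also have "\<dots> = q"
    unfolding q_def by (subst sum.swap) (simp add: mult_ac)
  finally have "Im q = 0"
    by (metis complex_cnj_cancel_iff Reals_cnj_iff complex_is_Real_iff)
  obtain a where a: "a < N" "v $ a \<noteq> 0"
    using eigenvector_nonzero_component[of "map_mat complex_of_real A" N v l] A v by auto
  have "R > 0"
    unfolding R_def
  proof (rule sum_pos2[where i = a])
    show "w a * (cmod (v $ a))\<^sup>2 > 0"
      using a w_pos by simp
  qed (use a w_pos in \<open>auto simp: less_imp_le\<close>)
  then show ?thesis
    using \<open>Im q = 0\<close> q_eq by (simp add: complex_is_Real_iff)
qed

lemma eigenvalue_norm_le_1_if_stochastic:
  fixes A :: "real mat"
  assumes A: "A \<in> carrier_mat N N"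
    and nonneg: "\<And>a c. a < N \<Longrightarrow> c < N \<Longrightarrow> A $$ (a, c) \<ge> 0"
    and row_sum: "\<And>a. a < N \<Longrightarrow> (\<Sum>c<N. A $$ (a, c)) = 1"
    and "eigenvalue (map_mat complex_of_real A) l"
  shows "cmod l \<le> 1"
proof -
  obtain v where v: "eigenvector (map_mat complex_of_real A) v l"
    using assms(4) unfolding eigenvalue_def by blast
  obtain a where a: "a < N" "v $ a \<noteq> 0"
    using eigenvector_nonzero_component[of "map_mat complex_of_real A" N v l] A v by auto
  define m where "m = Max ((\<lambda>c. cmod (v $ c)) ` {..<N})"
  have le_m: "cmod (v $ c) \<le> m" if "c < N" for c
    unfolding m_def using that by simp
  obtain a0 where a0: "a0 < N" "cmod (v $ a0) = m"
    using Max_in[of "(\<lambda>c. cmod (v $ c)) ` {..<N}"] a(1) unfolding m_def by fastforce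
  have "m > 0"
    using le_m[OF a(1)] a(2) by (meson less_le_trans zero_less_norm_iff)
  have "cmod l * m = cmod (\<Sum>c<N. complex_of_real (A $$ (a0, c)) * v $ c)"
    using eigenvector_of_real_component[OF A v a0(1)] a0(2) by (simp add: norm_mult)
  also have "\<dots> \<le> (\<Sum>c<N. cmod (complex_of_real (A $$ (a0, c)) * v $ c))"
    by (rule norm_sum)
  also have "\<dots> = (\<Sum>c<N. A $$ (a0, c) * cmod (v $ c))"
    using nonneg[OF a0(1)] by (intro sum.cong refl) (simp add: norm_mult)
  also have "\<dots> \<le> (\<Sum>c<N. A $$ (a0, c) * m)"
    using nonneg[OF a0(1)] le_m by (intro sum_mono mult_left_mono) auto
  also have "\<dots> = m"
    using row_sum[OF a0(1)] by (simp add: sum_distrib_right[symmetric])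
  finally show ?thesis
    using \<open>m > 0\<close> by simp
qed

lemma eigenvalue_uminus_if_bipartite:
  fixes A :: "'a::comm_ring_1 mat" and P :: "nat \<Rightarrow> bool"
  assumes A: "A \<in> carrier_mat N N"
    and bipartite: "\<And>a c. a < N \<Longrightarrow> c < N \<Longrightarrow> A $$ (a, c) \<noteq> 0 \<Longrightarrow> P a \<noteq> P c"
    and "eigenvalue A l"
  shows "eigenvalue A (- l)"
proof -
  obtain v where v: "eigenvector A v l"
    using assms(3) unfolding eigenvalue_def by blast
  obtain a where a: "a < N" "v $ a \<noteq> 0"
    using eigenvector_nonzero_component A v by blast
  define sign :: "nat \<Rightarrow> 'a" where "sign c = (if P c then - 1 else 1)" for c
  define u where "u = vec N (\<lambda>c. sign c * v $ c)"
  have flip: "A $$ (b, c) * u $ c = - sign b * (A $$ (b, c) * v $ c)" if "b < N" "c < N" for b c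
    using bipartite[OF that] that unfolding u_def sign_def by (cases "A $$ (b, c) = 0") auto
  have "A *\<^sub>v u = (- l) \<cdot>\<^sub>v u"
  proof (rule eq_vecI)
    fix b assume "b < dim_vec ((- l) \<cdot>\<^sub>v u)"
    then have b: "b < N" unfolding u_def by simp
    have "(A *\<^sub>v u) $ b = (\<Sum>c<N. A $$ (b, c) * u $ c)"
      using A b unfolding u_def by (simp add: scalar_prod_def lessThan_atLeast0)
    also have "\<dots> = - sign b * (l * v $ b)"
      using eigenvector_component[OF A v b] flip[OF b]
      by (simp add: sum_negf sum_distrib_left[symmetric])
    also have "\<dots> = ((- l) \<cdot>\<^sub>v u) $ b"
      using b unfolding u_def by simp
    finally show "(A *\<^sub>v u) $ b = ((- l) \<cdot>\<^sub>v u) $ b" .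
  qed (use A in \<open>simp add: u_def\<close>)
  moreover have "u $ a \<noteq> 0"
    using a unfolding u_def sign_def by simp
  then have "u \<noteq> 0\<^sub>v N"
    using a by auto
  moreover have "u \<in> carrier_vec N"
    unfolding u_def by simp
  ultimately show ?thesis
    using A unfolding eigenvalue_def eigenvector_def by auto
qed

lemma sum_lessThan_mult_blocks:
  fixes f :: "nat \<Rightarrow> 'a::comm_monoid_add"
  shows "(\<Sum>c<n * M. f c) = (\<Sum>r<M. \<Sum>j<n. f (r * n + j))"
proof -
  have "(\<Sum>c<n * M. f c) = (\<Sum>r<M. \<Sum>c\<in>{r * n..<r * n + n}. f c)"
    using sum.nat_group[of f n M] by (simp add: mult.commute)
  also have "\<dots> = (\<Sum>r<M. \<Sum>j<n. f (r * n + j))"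
  proof (rule sum.cong[OF refl])
    fix r
    show "(\<Sum>c\<in>{r * n..<r * n + n}. f c) = (\<Sum>j<n. f (r * n + j))"
      using sum.atLeastLessThan_shift_0[of f "r * n" "r * n + n"]
      by (simp add: lessThan_atLeast0 comp_def)
  qed
  finally show ?thesis .
qed

lemma block_index_bounds:
  fixes a n M :: nat
  assumes "a < n * M"
  shows "a div n + 1 \<in> {1..M}" and "a mod n < n"
proof -
  have "n > 0"
    using assms by (cases n) auto
  then show "a div n + 1 \<in> {1..M}" "a mod n < n"
    using assms by (auto simp: Suc_le_eq div_less_iff_less_mult mult.commute)
qed

lemma dim_mu [simp]: "dim_vec (mu n W t) = n"
  by (induction n W t rule: mu.induct) (auto simp: trans_mat_def)

lemma mu_Suc:
  assumes "1 \<le> t" and "i < n"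
  shows "mu n W (Suc t) $ i = (\<Sum>j<n. trans_mat n (W t) $$ (j, i) * mu n W t $ j)"
proof -
  obtain t' where "t = Suc t'"
    using assms(1) by (cases t) auto
  then show ?thesis
    using assms(2) by (simp add: trans_mat_def scalar_prod_def lessThan_atLeast0)
qed

definition Kcoeff :: "nat \<Rightarrow> nat \<Rightarrow> real" where
  "Kcoeff M s = (if s = 1 then 1 else if s < M then 1 / 2 else 0)"

definition Tcoeff :: "nat \<Rightarrow> nat \<Rightarrow> real" where
  "Tcoeff M s = (if s = 1 then 0 else if s < M then 1 / 2 else 1)"

definition Cblock :: "nat \<Rightarrow> nat \<Rightarrow> (nat \<Rightarrow> real mat) \<Rightarrow> nat \<Rightarrow> nat \<Rightarrow> nat \<Rightarrow> nat \<Rightarrow> real" where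
  "Cblock n M W s r i j =
     (if r = s + 1 then Kcoeff M s * Kmat n W s $$ (i, j) else 0)
   + (if s = r + 1 then Tcoeff M s * Tmat n W r $$ (i, j) else 0)"

lemma Cmat_index:
  assumes "a < n * M" and "c < n * M"
  shows "Cmat n M W $$ (a, c) = Cblock n M W (a div n + 1) (c div n + 1) (a mod n) (c mod n)"
  using assms block_index_bounds[OF assms(1)] block_index_bounds[OF assms(2)]
  unfolding Cmat_def Cblock_def Kcoeff_def Tcoeff_def Let_def by auto

lemma Cmat_carrier: "Cmat n M W \<in> carrier_mat (n * M) (n * M)"
  by (simp add: Cmat_def)

locale evolving_graph =
  fixes n M :: nat and W :: "nat \<Rightarrow> real mat"
  assumes M_ge_2: "M \<ge> 2"
    and W_nonneg: "\<And>t i j. t \<in> {1..M} \<Longrightarrow> i < n \<Longrightarrow> j < n \<Longrightarrow> W t $$ (i, j) \<ge> 0"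
    and rdeg_pos: "\<And>t i. t \<in> {1..M} \<Longrightarrow> i < n \<Longrightarrow> rdeg n (W t) i > 0"
    and mu_pos: "\<And>t i. t \<in> {1..M} \<Longrightarrow> i < n \<Longrightarrow> mu n W t $ i > 0"
begin

lemma Kmat_nonneg: "t \<in> {1..M} \<Longrightarrow> i < n \<Longrightarrow> j < n \<Longrightarrow> Kmat n W t $$ (i, j) \<ge> 0"
  using W_nonneg rdeg_pos by (simp add: Kmat_def trans_mat_def less_imp_le)

lemma Kmat_row_sum: "t \<in> {1..M} \<Longrightarrow> i < n \<Longrightarrow> (\<Sum>j<n. Kmat n W t $$ (i, j)) = 1"
  using rdeg_pos[of t i] by (simp add: Kmat_def trans_mat_def rdeg_def sum_divide_distrib[symmetric])

lemma Tmat_index: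
  "i < n \<Longrightarrow> j < n \<Longrightarrow>
   Tmat n W t $$ (i, j) = Kmat n W t $$ (j, i) * mu n W t $ j / mu n W (Suc t) $ i"
  by (simp add: Tmat_def Kmat_def)

lemma Tmat_nonneg: "t \<in> {1..<M} \<Longrightarrow> i < n \<Longrightarrow> j < n \<Longrightarrow> Tmat n W t $$ (i, j) \<ge> 0"
  using Kmat_nonneg[of t j i] mu_pos[of t j] mu_pos[of "Suc t" i] by (simp add: Tmat_index)

lemma Tmat_row_sum:
  assumes "t \<in> {1..<M}" and "i < n"
  shows "(\<Sum>j<n. Tmat n W t $$ (i, j)) = 1"
proof -
  have "(\<Sum>j<n. Tmat n W t $$ (i, j))
      = (\<Sum>j<n. Kmat n W t $$ (j, i) * mu n W t $ j) / mu n W (Suc t) $ i"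
    using assms(2) by (simp add: Tmat_index sum_divide_distrib)
  also have "\<dots> = 1"
    using assms mu_Suc[of t i n W] mu_pos[of "Suc t" i] by (simp add: Kmat_def)
  finally show ?thesis .
qed

lemma Kmat_Tmat_balance:
  assumes "t \<in> {1..<M}" and "i < n" and "j < n"
  shows "mu n W t $ i * Kmat n W t $$ (i, j) = mu n W (Suc t) $ j * Tmat n W t $$ (j, i)"
  using assms mu_pos[of "Suc t" j] by (simp add: Tmat_index)

(* The diagonal of B in the factorisation C = B^-1 A with A symmetric. *)
definition Cweight :: "nat \<Rightarrow> nat \<Rightarrow> real" where
  "Cweight s i = (if s = 1 \<or> s = M then 1 else 2) * mu n W s $ i"

lemma Cweight_pos: "s \<in> {1..M} \<Longrightarrow> i < n \<Longrightarrow> Cweight s i > 0"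
  using mu_pos by (simp add: Cweight_def)

lemma Cblock_nonneg:
  "s \<in> {1..M} \<Longrightarrow> r \<in> {1..M} \<Longrightarrow> i < n \<Longrightarrow> j < n \<Longrightarrow> Cblock n M W s r i j \<ge> 0"
  using Kmat_nonneg[of s i j] Tmat_nonneg[of r i j]
  by (auto simp: Cblock_def Kcoeff_def Tcoeff_def)

lemma Cblock_adjacent: "Cblock n M W s r i j \<noteq> 0 \<Longrightarrow> r = s + 1 \<or> s = r + 1"
  by (auto simp: Cblock_def split: if_splits)

lemma Cweight_Kcoeff: "s \<in> {1..<M} \<Longrightarrow> Cweight s i * Kcoeff M s = mu n W s $ i"
  by (auto simp: Cweight_def Kcoeff_def)

lemma Cweight_Tcoeff: "s \<in> {2..M} \<Longrightarrow> Cweight s i * Tcoeff M s = mu n W s $ i"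
  by (auto simp: Cweight_def Tcoeff_def)

lemma Cblock_balance_Suc:
  assumes "s \<in> {1..<M}" and "i < n" and "j < n"
  shows "Cweight s i * Cblock n M W s (Suc s) i j = Cweight (Suc s) j * Cblock n M W (Suc s) s j i"
proof -
  have "Cweight s i * Cblock n M W s (Suc s) i j = Cweight s i * Kcoeff M s * Kmat n W s $$ (i, j)"
    by (simp add: Cblock_def)
  also have "\<dots> = mu n W s $ i * Kmat n W s $$ (i, j)"
    using assms(1) by (simp add: Cweight_Kcoeff)
  also have "\<dots> = mu n W (Suc s) $ j * Tmat n W s $$ (j, i)"
    using Kmat_Tmat_balance assms .
  also have "\<dots> = Cweight (Suc s) j * Tcoeff M (Suc s) * Tmat n W s $$ (j, i)"
    using assms(1) by (simp add: Cweight_Tcoeff)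
  also have "\<dots> = Cweight (Suc s) j * Cblock n M W (Suc s) s j i"
    by (simp add: Cblock_def)
  finally show ?thesis .
qed

lemma Cblock_balance:
  assumes "s \<in> {1..M}" and "r \<in> {1..M}" and "i < n" and "j < n"
  shows "Cweight s i * Cblock n M W s r i j = Cweight r j * Cblock n M W r s j i"
proof -
  consider "r = Suc s" | "s = Suc r" | "r \<noteq> s + 1" "s \<noteq> r + 1"
    by fastforce
  then show ?thesis
  proof cases
    case 1
    then show ?thesis
      using assms Cblock_balance_Suc[of s i j] by simp
  next
    case 2
    then show ?thesis
      using assms Cblock_balance_Suc[of r j i] by simp
  qed (simp add: Cblock_def)
qed

lemma Cblock_row_sum:
  assumes "s \<in> {1..M}" and "i < n"
  shows "(\<Sum>r<M. \<Sum>j<n. Cblock n M W s (r + 1) i j) = 1"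
proof -
  have "(\<Sum>j<n. Cblock n M W s (r + 1) i j)
      = (if r = s then Kcoeff M s else 0) + (if r + 2 = s then Tcoeff M s else 0)"
    if "r < M" for r
    using that assms Kmat_row_sum[of s i] Tmat_row_sum[of "r + 1" i]
    by (auto simp: Cblock_def sum.distrib sum_distrib_left[symmetric])
  then have "(\<Sum>r<M. \<Sum>j<n. Cblock n M W s (r + 1) i j)
      = (\<Sum>r<M. (if r = s then Kcoeff M s else 0) + (if r = s - 2 \<and> 2 \<le> s then Tcoeff M s else 0))"
    by (intro sum.cong refl) auto
  also have "\<dots> = 1"
    using assms M_ge_2 by (auto simp: sum.distrib Kcoeff_def Tcoeff_def)
  finally show ?thesis .
qed

lemma Cmat_nonneg: "a < n * M \<Longrightarrow> c < n * M \<Longrightarrow> Cmat n M W $$ (a, c) \<ge> 0"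
  using Cblock_nonneg block_index_bounds by (simp add: Cmat_index)

lemma Cmat_adjacent_blocks:
  "a < n * M \<Longrightarrow> c < n * M \<Longrightarrow> Cmat n M W $$ (a, c) \<noteq> 0 \<Longrightarrow> even (a div n) \<noteq> even (c div n)"
  using Cblock_adjacent by (fastforce simp: Cmat_index)

lemma Cmat_balance:
  "a < n * M \<Longrightarrow> c < n * M \<Longrightarrow>
   Cweight (a div n + 1) (a mod n) * Cmat n M W $$ (a, c)
   = Cweight (c div n + 1) (c mod n) * Cmat n M W $$ (c, a)"
  using Cblock_balance block_index_bounds by (simp add: Cmat_index)

lemma Cmat_row_sum:
  assumes "a < n * M"
  shows "(\<Sum>c<n * M. Cmat n M W $$ (a, c)) = 1"
proof -
  have "(\<Sum>c<n * M. Cmat n M W $$ (a, c)) = (\<Sum>r<M. \<Sum>j<n. Cmat n M W $$ (a, r * n + j))"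
    by (rule sum_lessThan_mult_blocks)
  also have "\<dots> = (\<Sum>r<M. \<Sum>j<n. Cblock n M W (a div n + 1) (r + 1) (a mod n) j)"
  proof (intro sum.cong refl)
    fix r j assume "r \<in> {..<M}" and "j \<in> {..<n}"
    then have "r * n + j < n * M"
      using mult_le_mono1[of "Suc r" M n] by (simp add: mult.commute)
    then show "Cmat n M W $$ (a, r * n + j) = Cblock n M W (a div n + 1) (r + 1) (a mod n) j"
      using assms \<open>j \<in> {..<n}\<close> by (simp add: Cmat_index)
  qed
  also have "\<dots> = 1"
    using Cblock_row_sum block_index_bounds[OF assms] .
  finally show ?thesis .
qed

end

theorem proposition1:
  fixes n M :: nat and W :: "nat \<Rightarrow> real mat"
  assumes "n \<ge> 2" and "M \<ge> 2"
    and "\<And>t. t \<in> {1..M} \<Longrightarrow> W t \<in> carrier_mat n n"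
    and "\<And>t i j. t \<in> {1..M} \<Longrightarrow> i < n \<Longrightarrow> j < n \<Longrightarrow> W t $$ (i, j) \<ge> 0"
    and "\<And>t i. t \<in> {1..M} \<Longrightarrow> i < n \<Longrightarrow> rdeg n (W t) i > 0"
    and "\<And>t i. t \<in> {1..M} \<Longrightarrow> i < n \<Longrightarrow> mu n W t $ i > 0"
  shows "(\<forall>l. eigenvalue (map_mat complex_of_real (Cmat n M W)) l \<longrightarrow>
             l \<in> \<real> \<and> -1 \<le> Re l \<and> Re l \<le> 1)
       \<and> (\<forall>l. eigenvalue (map_mat complex_of_real (Cmat n M W)) l \<longrightarrow>
             eigenvalue (map_mat complex_of_real (Cmat n M W)) (- l))"
proof -
  interpret evolving_graph n M W
    using assms(2,4-6) by unfold_locales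
  have "l \<in> \<real> \<and> -1 \<le> Re l \<and> Re l \<le> 1"
    if ev: "eigenvalue (map_mat complex_of_real (Cmat n M W)) l" for l
  proof -
    have "l \<in> \<real>"
      by (rule eigenvalue_real_if_symmetrizable[where w = "\<lambda>a. Cweight (a div n + 1) (a mod n)",
            OF Cmat_carrier _ Cmat_balance ev])
        (metis Cweight_pos block_index_bounds)
    moreover have "cmod l \<le> 1"
      using Cmat_carrier Cmat_nonneg Cmat_row_sum ev by (rule eigenvalue_norm_le_1_if_stochastic)
    ultimately show ?thesis
      using abs_Re_le_cmod[of l] by linarith
  qed
  moreover have "eigenvalue (map_mat complex_of_real (Cmat n M W)) (- l)"
    if "eigenvalue (map_mat complex_of_real (Cmat n M W)) l" for l
    using Cmat_carrier[of n M W] Cmat_adjacent_blocks that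
    by (intro eigenvalue_uminus_if_bipartite[where P = "\<lambda>a. even (a div n)"])
      (auto dest: carrier_matD)
  ultimately show ?thesis
    by blast
qed

end
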